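(* Let $X$ be a complex Banach space and $T:X\to X$ a bounded linear operator which is an $m$-isometry and is recurrent. Then $T$ is a surjective isometry.
   Context: For $m\in\mathbb N$ and $p\in[1,\infty)$, $T$ is an $(m,p)$-isometry if $\sum_{k=0}^m(-1)^{m-k}\binom mk\|T^kx\|^p=0$ for every $x\in X$; $T$ is an $m$-isometry if it is an $(m,p)$-isometry for some $p\in[1,\infty)$. $T$ is recurrent if for every non-empty open $U\subset X$ there is a positive integer $k$ with $U\cap T^{-k}(U)\neq\emptyset$. *)

theory Defs
  imports "HOL-Analysis.Analysis"
begin

text \<open>A complex Banach space is
  rendered as a real Banach space together with a complex structure J
  (multiplication by the imaginary unit): complex scalar multiplication is
  c x = Re c x + Im c (J x), and the norm must be absolutely homogeneous for it.\<close>

definition complex_structure :: "('a::real_normed_vector \<Rightarrow> 'a) \<Rightarrow> bool" where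
  "complex_structure J \<longleftrightarrow> linear J \<and> (\<forall>x. J (J x) = - x) \<and>
     (\<forall>a b x. norm (a *\<^sub>R x + b *\<^sub>R J x) = cmod (Complex a b) * norm x)"

definition bounded_complex_linear ::
    "('a::real_normed_vector \<Rightarrow> 'a) \<Rightarrow> ('a \<Rightarrow> 'a) \<Rightarrow> bool" where
  "bounded_complex_linear J T \<longleftrightarrow> bounded_linear T \<and> (\<forall>x. T (J x) = J (T x))"

definition mp_isometry :: "nat \<Rightarrow> real \<Rightarrow> ('a::real_normed_vector \<Rightarrow> 'a) \<Rightarrow> bool" where
  "mp_isometry m p T \<longleftrightarrow>
     (\<forall>x. (\<Sum>k\<le>m. (-1) ^ (m - k) * real (m choose k) * norm ((T ^^ k) x) powr p) = 0)"

definition m_isometry :: "nat \<Rightarrow> ('a::real_normed_vector \<Rightarrow> 'a) \<Rightarrow> bool" where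
  "m_isometry m T \<longleftrightarrow> (\<exists>p. 1 \<le> p \<and> mp_isometry m p T)"

definition recurrent :: "('a::topological_space \<Rightarrow> 'a) \<Rightarrow> bool" where
  "recurrent T \<longleftrightarrow>
     (\<forall>U. open U \<and> U \<noteq> {} \<longrightarrow> (\<exists>k>0. U \<inter> (T ^^ k) -` U \<noteq> {}))"

end

theory Submission
  imports Defs
begin

text \<open>Write \<open>a\<^sub>y(n) = \<parallel>T^n y\<parallel>^p\<close>; an \<open>(m,p)\<close>-isometry is an operator with
  \<open>\<Delta>^m a\<^sub>y = 0\<close> for every \<open>y\<close>. If \<open>\<Delta>^(d+1) a\<^sub>y = 0\<close> for all \<open>y\<close>, then \<open>\<Delta>^(d-1) a\<^sub>y(k)\<close>
  grows linearly in \<open>k\<close> with slope \<open>\<Delta>^d a\<^sub>y(0)\<close>. Were that slope nonzero at some point,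
  continuity would keep it away from zero, and \<open>\<Delta>^(d-1) a\<^sub>y(0)\<close> nearly constant, on a
  neighbourhood; a recurrent return to this neighbourhood contradicts the linear growth.
  Descending from \<open>d = m\<close> to \<open>d = 1\<close> shows that \<open>T\<close> is an isometry. Its range is then
  closed, and an open set disjoint from the range of a recurrent map must be empty.\<close>

fun fin_diff :: "nat \<Rightarrow> (nat \<Rightarrow> real) \<Rightarrow> nat \<Rightarrow> real" where
  "fin_diff 0 a n = a n"
| "fin_diff (Suc j) a n = fin_diff j a (Suc n) - fin_diff j a n"

lemma fin_diff_eq_sum:
  "fin_diff j a n = (\<Sum>k\<le>j. (-1) ^ (j - k) * real (j choose k) * a (n + k))"
proof (induction j arbitrary: n)
  case 0
  then show ?case by simp
next
  case (Suc j)
  have shifted: "(\<Sum>k\<le>j. (-1) ^ (j - k) * real (j choose k) * a (Suc n + k))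
      = (\<Sum>k\<le>Suc j. (-1) ^ (Suc j - k) * real (j choose (k - 1)) * a (n + k) * (if k = 0 then 0 else 1))"
    by (subst sum.atMost_Suc_shift) simp
  have unshifted: "(\<Sum>k\<le>j. (-1) ^ (j - k) * real (j choose k) * a (n + k))
      = (\<Sum>k\<le>Suc j. (-1) ^ (Suc j - k) * real (j choose k) * a (n + k) * (-1))"
  proof -
    have "(\<Sum>k\<le>Suc j. (-1) ^ (Suc j - k) * real (j choose k) * a (n + k) * (-1))
        = (\<Sum>k\<le>j. (-1) ^ (Suc j - k) * real (j choose k) * a (n + k) * (-1))"
      by simp
    also have "\<dots> = (\<Sum>k\<le>j. (-1) ^ (j - k) * real (j choose k) * a (n + k))"
      by (intro sum.cong refl) (simp add: Suc_diff_le)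
    finally show ?thesis by simp
  qed
  have "fin_diff (Suc j) a n
      = (\<Sum>k\<le>Suc j. (-1) ^ (Suc j - k) * real (j choose (k - 1)) * a (n + k) * (if k = 0 then 0 else 1))
        - (\<Sum>k\<le>Suc j. (-1) ^ (Suc j - k) * real (j choose k) * a (n + k) * (-1))"
    by (simp only: fin_diff.simps Suc.IH shifted unshifted)
  also have "\<dots> = (\<Sum>k\<le>Suc j. (-1) ^ (Suc j - k) * real (Suc j choose k) * a (n + k))"
    unfolding sum_subtractf[symmetric]
    by (intro sum.cong refl) (auto simp: algebra_simps gr0_conv_Suc)
  finally show ?case .
qed

lemma fin_diff_shift: "fin_diff j a (n + i) = fin_diff j (\<lambda>k. a (k + i)) n"
proof (induction j arbitrary: n)
  case (Suc j)
  show ?case using Suc.IH[of "Suc n"] Suc.IH[of n] by simp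
qed simp

lemma fin_diff_linear_growth:
  assumes "\<And>n. fin_diff (Suc (Suc e)) b n = 0"
  shows "fin_diff e b k = fin_diff e b 0 + real k * fin_diff (Suc e) b 0"
proof -
  have step: "fin_diff j b (Suc n) = fin_diff j b n + fin_diff (Suc j) b n" for j n
    by simp
  have const: "fin_diff (Suc e) b i = fin_diff (Suc e) b 0" for i
  proof (induction i)
    case (Suc i)
    show ?case by (simp only: step assms Suc.IH add_0_right)
  qed rule
  show ?thesis
  proof (induction k)
    case (Suc k)
    show ?case by (simp only: step Suc.IH const[of k]) (simp add: algebra_simps)
  qed simp
qed

lemma continuous_on_funpow:
  fixes T :: "'a::topological_space \<Rightarrow> 'a"
  assumes "continuous_on UNIV T"
  shows "continuous_on UNIV (T ^^ i)"
proof (induction i)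
  case (Suc i)
  have "continuous_on UNIV (T \<circ> (T ^^ i))"
    by (rule continuous_on_compose[OF Suc.IH continuous_on_subset[OF assms]]) auto
  then show ?case by simp
qed (simp add: continuous_on_id)

lemma fin_diff_orbit_funpow:
  "fin_diff j (\<lambda>n. g ((T ^^ n) ((T ^^ i) y))) n = fin_diff j (\<lambda>n. g ((T ^^ n) y)) (n + i)"
  by (simp add: fin_diff_shift funpow_add)

lemma continuous_on_fin_diff_orbit:
  fixes T :: "'a::topological_space \<Rightarrow> 'a" and g :: "'a \<Rightarrow> real"
  assumes "continuous_on UNIV T" and "continuous_on UNIV g"
  shows "continuous_on UNIV (\<lambda>y. fin_diff j (\<lambda>n. g ((T ^^ n) y)) 0)"
  unfolding fin_diff_eq_sum
  by (intro continuous_intros continuous_on_compose2[OF assms(2) continuous_on_funpow[OF assms(1)]])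
    auto

lemma recurrent_returns:
  assumes "recurrent T" and "open U" and "x \<in> U"
  obtains k y where "k > 0" and "y \<in> U" and "(T ^^ k) y \<in> U"
  using assms unfolding recurrent_def by blast

lemma recurrent_fin_diff_orbit_descend:
  fixes T :: "'a::topological_space \<Rightarrow> 'a" and g :: "'a \<Rightarrow> real"
  assumes "recurrent T" "continuous_on UNIV T" "continuous_on UNIV g"
    and vanish: "\<And>y. fin_diff (Suc (Suc e)) (\<lambda>n. g ((T ^^ n) y)) 0 = 0"
  shows "fin_diff (Suc e) (\<lambda>n. g ((T ^^ n) y)) 0 = 0"
proof (rule ccontr)
  define D where "D j y = fin_diff j (\<lambda>n. g ((T ^^ n) y)) 0" for j y
  assume "\<not> ?thesis"
  then have D_pos: "\<bar>D (Suc e) y\<bar> > 0" by (simp add: D_def)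
  define c where "c = \<bar>D (Suc e) y\<bar>"
  define U where "U = {z. \<bar>D (Suc e) z - D (Suc e) y\<bar> < c / 2} \<inter> {z. \<bar>D e z - D e y\<bar> < c / 4}"
  have "open U"
    unfolding U_def D_def
    by (intro open_Int open_Collect_less continuous_intros continuous_on_fin_diff_orbit assms)
  moreover have "y \<in> U" unfolding U_def c_def using D_pos by simp
  ultimately obtain k z where k: "k > 0" and zU: "z \<in> U" and kzU: "(T ^^ k) z \<in> U"
    using assms(1) recurrent_returns by metis
  have "fin_diff (Suc (Suc e)) (\<lambda>n. g ((T ^^ n) z)) n = 0" for n
    using vanish[of "(T ^^ n) z"] fin_diff_orbit_funpow[of "Suc (Suc e)" g T n z 0] by simp
  then have "fin_diff e (\<lambda>n. g ((T ^^ n) z)) k = D e z + real k * D (Suc e) z"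
    unfolding D_def by (rule fin_diff_linear_growth)
  moreover have "D e ((T ^^ k) z) = fin_diff e (\<lambda>n. g ((T ^^ n) z)) k"
    using fin_diff_orbit_funpow[of e g T k z 0] by (simp add: D_def)
  ultimately have "D e ((T ^^ k) z) - D e z = real k * D (Suc e) z"
    by simp
  moreover have "\<bar>D e z - D e y\<bar> < c / 4" "\<bar>D e ((T ^^ k) z) - D e y\<bar> < c / 4"
    using zU kzU unfolding U_def by auto
  ultimately have small: "\<bar>real k * D (Suc e) z\<bar> < c / 2"
    by linarith
  have "\<bar>D (Suc e) z - D (Suc e) y\<bar> < c / 2"
    using zU unfolding U_def by auto
  then have big: "\<bar>D (Suc e) z\<bar> > c / 2"
    unfolding c_def by linarith
  have "\<bar>D (Suc e) z\<bar> \<le> \<bar>real k * D (Suc e) z\<bar>"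
    using k by (simp add: abs_mult mult_le_cancel_right1)
  with small big show False by linarith
qed

lemma recurrent_fin_diff_orbit_eq_0:
  fixes T :: "'a::topological_space \<Rightarrow> 'a" and g :: "'a \<Rightarrow> real"
  assumes "recurrent T" "continuous_on UNIV T" "continuous_on UNIV g"
    and "\<And>y. fin_diff m (\<lambda>n. g ((T ^^ n) y)) 0 = 0"
  shows "g (T y) = g y"
proof -
  have "fin_diff 1 (\<lambda>n. g ((T ^^ n) y)) 0 = 0"
    if vanish: "\<And>y. fin_diff k (\<lambda>n. g ((T ^^ n) y)) 0 = 0" for k y
    using vanish
  proof (induction k arbitrary: y rule: less_induct)
    case (less k)
    consider "k = 0" | "k = 1" | e where "k = Suc (Suc e)"
      by (metis One_nat_def not0_implies_Suc)
    then show ?case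
    proof cases
      case 1
      with less.prems have "g z = 0" for z
        by (metis fin_diff.simps(1) funpow_0)
      then show ?thesis by simp
    next
      case 2
      with less.prems show ?thesis by simp
    next
      case 3
      have "fin_diff (Suc e) (\<lambda>n. g ((T ^^ n) z)) 0 = 0" for z
        by (rule recurrent_fin_diff_orbit_descend[OF assms(1-3)]) (use less.prems 3 in simp)
      moreover have "Suc e < k" using 3 by simp
      ultimately show ?thesis by (rule less.IH[rotated])
    qed
  qed
  from this[OF assms(4)] show ?thesis by simp
qed

lemma recurrent_closed_range_imp_surj:
  assumes "recurrent T" and "closed (range T)"
  shows "surj T"
proof (rule ccontr)
  assume "\<not> surj T"
  then obtain x where x: "x \<in> - range T" by blast
  obtain k y where "k > 0" and "y \<in> - range T" and "(T ^^ k) y \<in> - range T"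
    by (rule recurrent_returns[OF assms(1) open_Compl[OF assms(2)] x])
  moreover have "(T ^^ k) y = T ((T ^^ (k - 1)) y)"
    using \<open>k > 0\<close> by (cases k) simp_all
  ultimately show False by simp
qed

lemma bounded_linear_isometry_closed_range:
  fixes T :: "'a::banach \<Rightarrow> 'b::real_normed_vector"
  assumes "bounded_linear T" and "\<And>x. norm (T x) = norm x"
  shows "closed (range T)"
  by (intro complete_imp_closed complete_isometric_image[of 1])
    (auto simp: assms complete_UNIV subspace_UNIV)

lemma powr_eq_imp_eq_base:
  fixes x y p :: real
  assumes "x powr p = y powr p" "0 \<le> x" "0 \<le> y" "0 < p"
  shows "x = y"
  using assms powr_less_mono2[of p x y] powr_less_mono2[of p y x]
  by (cases x y rule: linorder_cases) auto

lemma mp_isometry_fin_diff: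
  assumes "mp_isometry m p T"
  shows "fin_diff m (\<lambda>n. norm ((T ^^ n) y) powr p) 0 = 0"
  using assms unfolding mp_isometry_def fin_diff_eq_sum by simp

theorem proposition8p5:
  fixes J T :: "'a::banach \<Rightarrow> 'a" and m :: nat
  assumes "complex_structure J"
    and "bounded_complex_linear J T"
    and "m_isometry m T"
    and "recurrent T"
  shows "surj T \<and> (\<forall>x. norm (T x) = norm x)"
proof -
  obtain p where p: "1 \<le> p" and mp: "mp_isometry m p T"
    using assms(3) unfolding m_isometry_def by blast
  have T: "bounded_linear T"
    using assms(2) unfolding bounded_complex_linear_def by blast
  then have cont_T: "continuous_on UNIV T"
    by (simp add: linear_continuous_on)
  have "continuous_on UNIV (\<lambda>x::'a. norm x powr p)"
    using p by (intro continuous_on_powr' continuous_intros) auto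
  then have "norm (T x) powr p = norm x powr p" for x
    using recurrent_fin_diff_orbit_eq_0[OF assms(4) cont_T _ mp_isometry_fin_diff[OF mp]] by blast
  then have iso: "norm (T x) = norm x" for x
    by (rule powr_eq_imp_eq_base) (use p in auto)
  have "surj T"
    using recurrent_closed_range_imp_surj[OF assms(4)]
      bounded_linear_isometry_closed_range[OF T iso] by blast
  with iso show ?thesis by blast
qed

end
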